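(* Fractional weak stability does not imply ex-post weak stability: there exist a set $N$ of $n$ agents and a set $O$ of $n$ objects, with weak preferences $\succsim_i$ over $O$ ($i\in N$) and weak priorities $\succsim_o$ over $N$ ($o\in O$), and a random matching $p$ that is fractionally weakly stable but not ex-post weakly stable.
   Context: Preferences $\succsim_i$ and priorities $\succsim_o$ are weak orders (complete and transitive), with strict parts $\succ_i,\succ_o$. A random matching is an $n\times n$ bistochastic matrix $p=[p(i,o)]_{i\in N,o\in O}$ (nonnegative entries, every row and every column summing to $1$); it is deterministic if all entries lie in $\{0,1\}$. A deterministic matching $p$ is weakly stable if there exist no $i,j\in N$, $o,o'\in O$ with $p(i,o')=1$, $p(j,o)=1$, $o\succ_i o'$ and $i\succ_o j$. A random matching is ex-post weakly stable if it can be written as $\sum_{j=1}^k\lambda_jP_j$ with each $P_j$ a weakly stable deterministic matching, $\lambda_j\in(0,1]$, $\sum_j\lambda_j=1$. It is fractionally weakly stable if for every $(i,o)\in N\times O$, $\sum_{o':o'\succsim_i o,\,o'\neq o}p(i,o')\ge\sum_{j:i\succ_o j}p(j,o)$. *)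

theory Defs
  imports Main "HOL-Analysis.Analysis"
begin

text \<open>A weak order on a set A is a complete (total) and transitive relation R on A,
where R x y means x is weakly preferred to y.\<close>

definition weak_order_on :: "'a set \<Rightarrow> ('a \<Rightarrow> 'a \<Rightarrow> bool) \<Rightarrow> bool" where
  "weak_order_on A R \<longleftrightarrow>
     (\<forall>x\<in>A. \<forall>y\<in>A. R x y \<or> R y x) \<and>
     (\<forall>x\<in>A. \<forall>y\<in>A. \<forall>z\<in>A. R x y \<longrightarrow> R y z \<longrightarrow> R x z)"

definition strict :: "('a \<Rightarrow> 'a \<Rightarrow> bool) \<Rightarrow> 'a \<Rightarrow> 'a \<Rightarrow> bool" where
  "strict R x y \<longleftrightarrow> R x y \<and> \<not> R y x"

definition random_matching :: "nat set \<Rightarrow> nat set \<Rightarrow> (nat \<Rightarrow> nat \<Rightarrow> real) \<Rightarrow> bool" where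
  "random_matching N Ob p \<longleftrightarrow>
     (\<forall>i\<in>N. \<forall>b\<in>Ob. p i b \<ge> 0) \<and>
     (\<forall>i\<in>N. (\<Sum>b\<in>Ob. p i b) = 1) \<and>
     (\<forall>b\<in>Ob. (\<Sum>i\<in>N. p i b) = 1)"

definition deterministic_matching :: "nat set \<Rightarrow> nat set \<Rightarrow> (nat \<Rightarrow> nat \<Rightarrow> real) \<Rightarrow> bool" where
  "deterministic_matching N Ob p \<longleftrightarrow>
     random_matching N Ob p \<and> (\<forall>i\<in>N. \<forall>b\<in>Ob. p i b = 0 \<or> p i b = 1)"

definition weakly_stable ::
  "nat set \<Rightarrow> nat set \<Rightarrow> (nat \<Rightarrow> nat \<Rightarrow> nat \<Rightarrow> bool) \<Rightarrow> (nat \<Rightarrow> nat \<Rightarrow> nat \<Rightarrow> bool)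
   \<Rightarrow> (nat \<Rightarrow> nat \<Rightarrow> real) \<Rightarrow> bool" where
  "weakly_stable N Ob pref prio P \<longleftrightarrow>
     deterministic_matching N Ob P \<and>
     \<not> (\<exists>i\<in>N. \<exists>j\<in>N. \<exists>b\<in>Ob. \<exists>b'\<in>Ob.
          P i b' = 1 \<and> P j b = 1 \<and> strict (pref i) b b' \<and> strict (prio b) i j)"

definition ex_post_weakly_stable ::
  "nat set \<Rightarrow> nat set \<Rightarrow> (nat \<Rightarrow> nat \<Rightarrow> nat \<Rightarrow> bool) \<Rightarrow> (nat \<Rightarrow> nat \<Rightarrow> nat \<Rightarrow> bool)
   \<Rightarrow> (nat \<Rightarrow> nat \<Rightarrow> real) \<Rightarrow> bool" where
  "ex_post_weakly_stable N Ob pref prio p \<longleftrightarrow>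
     (\<exists>k::nat. \<exists>lam::nat \<Rightarrow> real. \<exists>P::nat \<Rightarrow> nat \<Rightarrow> nat \<Rightarrow> real.
        k \<ge> 1 \<and>
        (\<forall>j<k. weakly_stable N Ob pref prio (P j)) \<and>
        (\<forall>j<k. 0 < lam j \<and> lam j \<le> 1) \<and>
        (\<Sum>j<k. lam j) = 1 \<and>
        (\<forall>i\<in>N. \<forall>b\<in>Ob. p i b = (\<Sum>j<k. lam j * P j i b)))"

definition fractionally_weakly_stable ::
  "nat set \<Rightarrow> nat set \<Rightarrow> (nat \<Rightarrow> nat \<Rightarrow> nat \<Rightarrow> bool) \<Rightarrow> (nat \<Rightarrow> nat \<Rightarrow> nat \<Rightarrow> bool)
   \<Rightarrow> (nat \<Rightarrow> nat \<Rightarrow> real) \<Rightarrow> bool" where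
  "fractionally_weakly_stable N Ob pref prio p \<longleftrightarrow>
     (\<forall>i\<in>N. \<forall>b\<in>Ob.
        (\<Sum>b'\<in>{b'\<in>Ob. pref i b' b \<and> b' \<noteq> b}. p i b')
          \<ge> (\<Sum>j\<in>{j\<in>N. strict (prio b) i j}. p j b))"

end

theory Submission
  imports Defs
begin

text \<open>Three agents 0, 1, 2 and three objects 0, 1, 2. Agents 0 and 1 prefer object 1 to the
indifferent pair 0, 2; agent 2 prefers the indifferent pair 0, 2 to object 1. Object 0 ranks agent 1
above the indifferent pair 0, 2; object 1 ranks the indifferent pair 0, 2 above agent 1; object 2
ranks 1 above 2 above 0. The uniform random matching on the off-diagonal cells is fractionally
weakly stable, yet no weakly stable matching gives object 2 to agent 0: agent 0 would then block
with object 1 against agent 1, or agent 2 with object 2 against agent 0, depending on who holds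
object 1. So the positive entry at (0, 2) cannot come from a lottery over weakly stable matchings.\<close>

lemma weak_order_on_rank: "weak_order_on A (\<lambda>x y. f x \<le> (f y :: 'b :: linorder))"
  unfolding weak_order_on_def by auto

lemma deterministic_matching_row_unique:
  assumes "deterministic_matching N Ob P" "i \<in> N" "b \<in> Ob" "b' \<in> Ob" "b' \<noteq> b" "P i b = 1"
  shows "P i b' = 0"
proof -
  have nonneg: "\<forall>c\<in>Ob. P i c \<ge> 0" and row: "(\<Sum>c\<in>Ob. P i c) = 1"
    using assms(1,2) unfolding deterministic_matching_def random_matching_def by auto
  then have "finite Ob" by (metis sum.infinite zero_neq_one)
  have "P i b + P i b' = (\<Sum>c\<in>{b, b'}. P i c)" using assms(5) by simp
  also have "\<dots> \<le> (\<Sum>c\<in>Ob. P i c)"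
    using \<open>finite Ob\<close> assms(3,4) nonneg by (intro sum_mono2) auto
  finally have "P i b' \<le> 0" using row assms(6) by simp
  then show ?thesis using nonneg assms(4) by (simp add: antisym)
qed

lemma deterministic_matching_column_assigned:
  assumes "deterministic_matching N Ob P" "b \<in> Ob"
  obtains j where "j \<in> N" "P j b = 1"
proof -
  have "(\<Sum>j\<in>N. P j b) = 1" and "\<forall>j\<in>N. P j b = 0 \<or> P j b = 1"
    using assms unfolding deterministic_matching_def random_matching_def by auto
  then show ?thesis using that by (metis sum.neutral zero_neq_one)
qed

lemma weakly_stable_no_blocking_pair:
  assumes "weakly_stable N Ob pref prio P" "i \<in> N" "j \<in> N" "b \<in> Ob" "b' \<in> Ob"
    and "P i b' = 1" "P j b = 1" "strict (pref i) b b'"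
  shows "\<not> strict (prio b) i j"
  using assms unfolding weakly_stable_def by blast

lemma ex_post_weakly_stable_vanishes:
  assumes "ex_post_weakly_stable N Ob pref prio p" "i \<in> N" "b \<in> Ob"
    and "\<And>P. weakly_stable N Ob pref prio P \<Longrightarrow> P i b = 0"
  shows "p i b = 0"
proof -
  obtain k :: nat and lam :: "nat \<Rightarrow> real" and P :: "nat \<Rightarrow> nat \<Rightarrow> nat \<Rightarrow> real"
    where stable: "\<forall>j<k. weakly_stable N Ob pref prio (P j)"
    and decomp: "\<forall>i\<in>N. \<forall>b\<in>Ob. p i b = (\<Sum>j<k. lam j * P j i b)"
    using assms(1) unfolding ex_post_weakly_stable_def by blast
  show ?thesis unfolding decomp[rule_format, OF assms(2,3)] using stable assms(4) by (intro sum.neutral) auto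
qed

text \<open>Preferences and priorities are encoded by ranks, a smaller rank being better.\<close>

definition example_rank_pref :: "nat \<Rightarrow> nat \<Rightarrow> nat" where
  "example_rank_pref i b = [[2,0,2], [2,0,2], [0,1,0]] ! i ! b"

definition example_rank_prio :: "nat \<Rightarrow> nat \<Rightarrow> nat" where
  "example_rank_prio b i = [[2,0,2], [0,1,0], [2,0,1]] ! b ! i"

definition example_pref :: "nat \<Rightarrow> nat \<Rightarrow> nat \<Rightarrow> bool" where
  "example_pref i x y \<longleftrightarrow> example_rank_pref i x \<le> example_rank_pref i y"

definition example_prio :: "nat \<Rightarrow> nat \<Rightarrow> nat \<Rightarrow> bool" where
  "example_prio b x y \<longleftrightarrow> example_rank_prio b x \<le> example_rank_prio b y"

definition example_matching :: "nat \<Rightarrow> nat \<Rightarrow> real" where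
  "example_matching i b = (if i = b then 0 else 1/2)"

lemma example_random_matching: "random_matching {0,1,2} {0,1,2} example_matching"
  unfolding random_matching_def example_matching_def by auto

lemma example_fractionally_weakly_stable:
  "fractionally_weakly_stable {0,1,2} {0,1,2} example_pref example_prio example_matching"
proof -
  have filter_insert: "{x. (x = a \<or> R x) \<and> Q x} = (if Q a then insert a {x. R x \<and> Q x} else {x. R x \<and> Q x})"
    and filter_single: "{x. x = a \<and> Q x} = (if Q a then {a} else {})" for a :: nat and R Q
    by auto
  show ?thesis
    unfolding fractionally_weakly_stable_def Ball_def
    by (simp add: filter_insert filter_single example_matching_def example_pref_def example_prio_def
        example_rank_pref_def example_rank_prio_def strict_def)
qed

lemma example_stable_avoids_0_2:
  assumes stable: "weakly_stable {0,1,2} {0,1,2} example_pref example_prio P"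
  shows "P 0 2 = 0"
proof (rule ccontr)
  have det: "deterministic_matching {0,1,2} {0,1,2} P"
    using stable unfolding weakly_stable_def by blast
  then have binary: "P 0 2 = 0 \<or> P 0 2 = 1"
    unfolding deterministic_matching_def by simp
  assume "P 0 2 \<noteq> 0"
  with binary have P02: "P 0 2 = 1" by simp
  obtain j where j: "j \<in> {0,1,2}" "P j 1 = 1"
    using deterministic_matching_column_assigned[OF det, of 1] by auto
  have "P 0 1 = 0"
    using deterministic_matching_row_unique[OF det, of 0 2 1] P02 by simp
  with j(2) have "j \<noteq> 0" by (metis zero_neq_one)
  then consider "j = 1" | "j = 2" using j(1) by auto
  then show False
  proof cases
    case 1
    then show False
      using weakly_stable_no_blocking_pair[OF stable, of 0 1 1 2] P02 j(2)
      by (simp add: strict_def example_pref_def example_prio_def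
          example_rank_pref_def example_rank_prio_def)
  next
    case 2
    then show False
      using weakly_stable_no_blocking_pair[OF stable, of 2 0 2 1] P02 j(2)
      by (simp add: strict_def example_pref_def example_prio_def
          example_rank_pref_def example_rank_prio_def)
  qed
qed

theorem proposition17:
  shows "\<exists>(N::nat set) (Ob::nat set) (n::nat)
            (pref::nat \<Rightarrow> nat \<Rightarrow> nat \<Rightarrow> bool) (prio::nat \<Rightarrow> nat \<Rightarrow> nat \<Rightarrow> bool)
            (p::nat \<Rightarrow> nat \<Rightarrow> real).
           finite N \<and> finite Ob \<and> card N = n \<and> card Ob = n \<and>
           (\<forall>i\<in>N. weak_order_on Ob (pref i)) \<and>
           (\<forall>b\<in>Ob. weak_order_on N (prio b)) \<and>
           random_matching N Ob p \<and>
           fractionally_weakly_stable N Ob pref prio p \<and>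
           \<not> ex_post_weakly_stable N Ob pref prio p"
proof -
  have "\<not> ex_post_weakly_stable {0,1,2} {0,1,2} example_pref example_prio example_matching"
  proof
    assume "ex_post_weakly_stable {0,1,2} {0,1,2} example_pref example_prio example_matching"
    then have "example_matching 0 2 = 0"
      by (rule ex_post_weakly_stable_vanishes) (auto intro: example_stable_avoids_0_2)
    then show False by (simp add: example_matching_def)
  qed
  moreover have "weak_order_on {0,1,2} (example_pref i)" "weak_order_on {0,1,2} (example_prio b)"
    for i b
    unfolding example_pref_def example_prio_def by (rule weak_order_on_rank)+
  ultimately show ?thesis
    using example_random_matching example_fractionally_weakly_stable
    by (intro exI[of _ "{0,1,2}"] exI[of _ 3] exI[of _ example_pref] exI[of _ example_prio]
        exI[of _ example_matching]) simp
qed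

end
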